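(* Let $S=\{a+b\sqrt2 : a,b\in\mathbb Z_{\ge0},\ (a,b)\neq(0,0)\}$, a semiring (closed under addition and multiplication). Then: (i) the only invertible element of $S$ is $1$; (ii) $7(5+2\sqrt2)=(3+8\sqrt2)(1+2\sqrt2)$, and the four elements $7$, $5+2\sqrt2$, $3+8\sqrt2$, $1+2\sqrt2$ are all prime (irreducible) in $S$; (iii) Pythagorean proportionality in $S$ is not transitive; (iv) $7(5+2\sqrt2)$ and $7(1+2\sqrt2)$ have no algebraic gcd in $S$.
   Context: In the multiplicative monoid $S$, $u$ divides $w$ if $w=uz$ for some $z\in S$; a non-unit element is prime (irreducible) if its only divisors in $S$ are $1$ and itself. Pythagorean proportionality in $S$: $a:b=c:d$ if there exist $x,y,m,n\in S$ with $a=mx$, $b=nx$, $c=my$, $d=ny$. An algebraic gcd of $a,b\in S$ is a common divisor of $a$ and $b$ in $S$ that is divisible (in $S$) by every common divisor of $a$ and $b$ in $S$. *)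

theory Defs
  imports Complex_Main
begin

definition S :: "real set" where
  "S = {real a + real b * sqrt 2 | a b :: nat. (a, b) \<noteq> (0, 0)}"

definition sdvd :: "real \<Rightarrow> real \<Rightarrow> bool" where
  "sdvd u w \<longleftrightarrow> (\<exists>z\<in>S. w = u * z)"

definition sunit :: "real \<Rightarrow> bool" where
  "sunit x \<longleftrightarrow> x \<in> S \<and> (\<exists>y\<in>S. x * y = 1)"

definition sprime :: "real \<Rightarrow> bool" where
  "sprime p \<longleftrightarrow> p \<in> S \<and> \<not> sunit p \<and> (\<forall>u\<in>S. sdvd u p \<longrightarrow> u = 1 \<or> u = p)"

definition sprop :: "real \<Rightarrow> real \<Rightarrow> real \<Rightarrow> real \<Rightarrow> bool" where
  "sprop a b c d \<longleftrightarrow> (\<exists>x\<in>S. \<exists>y\<in>S. \<exists>m\<in>S. \<exists>n\<in>S.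
      a = m * x \<and> b = n * x \<and> c = m * y \<and> d = n * y)"

definition is_sgcd :: "real \<Rightarrow> real \<Rightarrow> real \<Rightarrow> bool" where
  "is_sgcd g a b \<longleftrightarrow> g \<in> S \<and> sdvd g a \<and> sdvd g b \<and>
      (\<forall>c\<in>S. sdvd c a \<and> sdvd c b \<longrightarrow> sdvd c g)"

end

theory Submission imports Defs begin

text \<open>Since \<open>sqrt 2\<close> is irrational, every element of \<open>S\<close> has unique coordinates \<open>(a, b)\<close>, and
  a factorisation in \<open>S\<close> is a solution in natural numbers of \<open>a = c e + 2 d f\<close>, \<open>b = c f + d e\<close>.
  For the four given elements these equations admit only the trivial solutions, so they are
  prime, and \<open>1\<close> is the only unit. Writing \<open>p = 7\<close>, \<open>q = 5 + 2 sqrt 2\<close>, \<open>r = 3 + 8 sqrt 2\<close>,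
  \<open>s = 1 + 2 sqrt 2\<close>, the identity \<open>p q = r s\<close> gives \<open>p : s = p q : q s\<close> and
  \<open>p q : q s = r : q\<close>, while \<open>p : s = r : q\<close> would make \<open>p\<close> divide \<open>r\<close> or \<open>s\<close>. Likewise a gcd
  of \<open>p q\<close> and \<open>p s\<close> would be divisible by both \<open>p\<close> and \<open>s\<close> (as \<open>p q = r s\<close>), which
  leaves no candidate among the divisors \<open>p\<close> and \<open>p q\<close> of \<open>p q\<close>.\<close>

lemma nat_square_eq_double_square_imp_zero:
  fixes m k :: nat
  assumes "m^2 = 2 * k^2"
  shows "k = 0"
  using assms
proof (induction m arbitrary: k rule: less_induct)
  case (less m)
  show ?case
  proof (cases "m = 0")
    case True
    with less.prems show ?thesis by simp
  next
    case False
    from less.prems have "even m" by (metis dvd_triv_left even_power)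
    then obtain m' where m': "m = 2 * m'" by blast
    with less.prems have "k^2 = 2 * m'^2" by (simp add: power2_eq_square)
    then have "even k" by (metis dvd_triv_left even_power)
    then obtain k' where k': "k = 2 * k'" by blast
    with \<open>k^2 = 2 * m'^2\<close> have "m'^2 = 2 * k'^2" by (simp add: power2_eq_square)
    moreover have "m' < m" using m' False by simp
    ultimately have "k' = 0" using less.IH by blast
    with k' show ?thesis by simp
  qed
qed

lemma int_square_eq_double_square_imp_zero:
  fixes m k :: int
  assumes "m^2 = 2 * k^2"
  shows "k = 0"
proof -
  have "int ((nat \<bar>m\<bar>)^2) = int (2 * (nat \<bar>k\<bar>)^2)"
    using assms by simp
  then have "(nat \<bar>m\<bar>)^2 = 2 * (nat \<bar>k\<bar>)^2" by (simp only: of_nat_eq_iff)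
  then have "nat \<bar>k\<bar> = 0" by (rule nat_square_eq_double_square_imp_zero)
  then show ?thesis by simp
qed

lemma nat_plus_sqrt2_inject:
  "real a + real b * sqrt 2 = real c + real d * sqrt 2 \<longleftrightarrow> a = c \<and> b = d"
proof
  assume eq: "real a + real b * sqrt 2 = real c + real d * sqrt 2"
  then have "real c - real a = (real b - real d) * sqrt 2"
    by (simp add: algebra_simps)
  then have "(real c - real a)^2 = ((real b - real d) * sqrt 2)^2"
    by simp
  then have "real_of_int ((int c - int a)^2) = real_of_int (2 * (int b - int d)^2)"
    by (simp add: power_mult_distrib)
  then have "(int c - int a)^2 = 2 * (int b - int d)^2"
    by (simp only: of_int_eq_iff)
  then have "int b - int d = 0"
    by (rule int_square_eq_double_square_imp_zero)
  with eq show "a = c \<and> b = d" by simp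
qed simp

lemma nat_plus_sqrt2_mult:
  "(real a + real b * sqrt 2) * (real c + real d * sqrt 2)
     = real (a * c + 2 * b * d) + real (a * d + b * c) * sqrt 2"
proof -
  have "sqrt 2 * sqrt 2 = (2::real)" by simp
  then show ?thesis by (simp add: algebra_simps)
qed

lemma mem_S_iff: "x \<in> S \<longleftrightarrow> (\<exists>a b. (a, b) \<noteq> (0, 0) \<and> x = real a + real b * sqrt 2)"
  unfolding S_def by auto

lemma one_in_S: "1 \<in> S"
  unfolding mem_S_iff by (rule exI[of _ 1], rule exI[of _ 0]) simp

lemma S_mult_closed:
  assumes "x \<in> S" "y \<in> S"
  shows "x * y \<in> S"
proof -
  obtain a b where ab: "(a, b) \<noteq> (0, 0)" "x = real a + real b * sqrt 2"
    using assms(1) mem_S_iff by auto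
  obtain c d where cd: "(c, d) \<noteq> (0, 0)" "y = real c + real d * sqrt 2"
    using assms(2) mem_S_iff by auto
  have "(a * c + 2 * b * d, a * d + b * c) \<noteq> (0, 0)" using ab(1) cd(1) by auto
  then show ?thesis unfolding mem_S_iff using ab(2) cd(2) nat_plus_sqrt2_mult by blast
qed

lemma S_pos: "x \<in> S \<Longrightarrow> 0 < x"
  unfolding mem_S_iff by (auto simp: add_pos_nonneg add_nonneg_pos)

lemma sunit_iff: "sunit x \<longleftrightarrow> x = 1"
proof
  assume "sunit x"
  then obtain y where xy: "x \<in> S" "y \<in> S" "x * y = 1" unfolding sunit_def by auto
  obtain a b where ab: "(a, b) \<noteq> (0, 0)" "x = real a + real b * sqrt 2"
    using xy(1) mem_S_iff by auto
  obtain c d where cd: "y = real c + real d * sqrt 2"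
    using xy(2) mem_S_iff by auto
  have "real (a * c + 2 * b * d) + real (a * d + b * c) * sqrt 2 = real 1 + real 0 * sqrt 2"
    using xy(3) ab(2) cd nat_plus_sqrt2_mult by simp
  then have eqs: "a * c + 2 * b * d = 1" "a * d + b * c = 0"
    unfolding nat_plus_sqrt2_inject by auto
  then have "a = 1" by (cases "b * d") auto
  with eqs have "b = 0" by simp
  with ab(2) \<open>a = 1\<close> show "x = 1" by simp
next
  assume "x = 1"
  then show "sunit x" unfolding sunit_def using one_in_S by auto
qed

lemma sprime_nat_plus_sqrt2I:
  assumes "(a, b) \<noteq> (0, 0)" "(a, b) \<noteq> (1, 0)"
    and trivial_factors: "\<And>c d e f. c * e + 2 * d * f = a \<Longrightarrow> c * f + d * e = b
        \<Longrightarrow> (c, d) \<noteq> (0, 0) \<Longrightarrow> (e, f) \<noteq> (0, 0) \<Longrightarrow> (c = 1 \<and> d = 0) \<or> (e = 1 \<and> f = 0)"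
  shows "sprime (real a + real b * sqrt 2)"
  unfolding sprime_def sunit_iff
proof (intro conjI ballI impI)
  show "real a + real b * sqrt 2 \<in> S" unfolding mem_S_iff using assms(1) by blast
  show "real a + real b * sqrt 2 \<noteq> 1"
    using assms(2) nat_plus_sqrt2_inject[of a b 1 0] by auto
  fix u assume "u \<in> S" and "sdvd u (real a + real b * sqrt 2)"
  then obtain z where z: "z \<in> S" "real a + real b * sqrt 2 = u * z" unfolding sdvd_def by auto
  obtain c d where cd: "(c, d) \<noteq> (0, 0)" "u = real c + real d * sqrt 2"
    using \<open>u \<in> S\<close> mem_S_iff by auto
  obtain e f where ef: "(e, f) \<noteq> (0, 0)" "z = real e + real f * sqrt 2"
    using z(1) mem_S_iff by auto
  have "real a + real b * sqrt 2 = real (c * e + 2 * d * f) + real (c * f + d * e) * sqrt 2"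
    using z(2) cd(2) ef(2) nat_plus_sqrt2_mult by simp
  then have "c * e + 2 * d * f = a" "c * f + d * e = b"
    unfolding nat_plus_sqrt2_inject by auto
  from trivial_factors[OF this cd(1) ef(1)] show "u = 1 \<or> u = real a + real b * sqrt 2"
    using z(2) cd(2) ef(2) by auto
qed

lemma odd_imp_rational_parts_pos:
  fixes a c d e f :: nat
  assumes "c * e + 2 * d * f = a" "odd a"
  shows "0 < c" "0 < e"
  using assms by (auto intro!: Nat.gr0I)

lemma coprime_imp_trivial_factor:
  fixes a b c d e f :: nat
  assumes "c * e + 2 * d * f = a" "c * f + d * e = b" "coprime a b" "d = 0 \<or> f = 0"
  shows "(c = 1 \<and> d = 0) \<or> (e = 1 \<and> f = 0)"
  using assms(4)
proof
  assume "d = 0"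
  with assms(1,2) have "c dvd a" "c dvd b" by auto
  with assms(3) have "c = 1" using coprime_common_divisor_nat by blast
  with \<open>d = 0\<close> show ?thesis by simp
next
  assume "f = 0"
  with assms(1,2) have "e dvd a" "e dvd b" by auto
  with assms(3) have "e = 1" using coprime_common_divisor_nat by blast
  with \<open>f = 0\<close> show ?thesis by simp
qed

text \<open>Two factors with nonzero irrational parts: the extremal case is
  \<open>(1 + sqrt 2)^2 = 3 + 2 sqrt 2\<close>.\<close>

lemma positive_factors_bounds:
  fixes a b c d e f :: nat
  assumes "c * e + 2 * d * f = a" "c * f + d * e = b" "0 < c" "0 < d" "0 < e" "0 < f"
  shows "3 \<le> a" "a = 3 \<longleftrightarrow> b = 2"
proof -
  have pos: "1 \<le> c * e" "1 \<le> d * f" "1 \<le> c * f" "1 \<le> d * e"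
    using assms(3-6) by (simp_all add: Suc_le_eq)
  then show "3 \<le> a" using assms(1) by linarith
  have "a = 3 \<longleftrightarrow> c * e = 1 \<and> d * f = 1" using pos assms(1) by linarith
  also have "\<dots> \<longleftrightarrow> c = 1 \<and> d = 1 \<and> e = 1 \<and> f = 1" by auto
  also have "\<dots> \<longleftrightarrow> c * f = 1 \<and> d * e = 1" by auto
  also have "\<dots> \<longleftrightarrow> b = 2" using pos assms(2) by linarith
  finally show "a = 3 \<longleftrightarrow> b = 2" .
qed

lemma sprime_nat_plus_sqrt2_if_odd_coprime:
  assumes "odd a" "coprime a b" "b \<noteq> 0" "a < 3 \<or> (a = 3 \<longleftrightarrow> b \<noteq> 2)"
  shows "sprime (real a + real b * sqrt 2)"
proof (rule sprime_nat_plus_sqrt2I)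
  fix c d e f :: nat
  assume eqs: "c * e + 2 * d * f = a" "c * f + d * e = b"
  have "0 < c" "0 < e" using odd_imp_rational_parts_pos[OF eqs(1) assms(1)] by auto
  have "d = 0 \<or> f = 0"
  proof (rule ccontr)
    assume "\<not> (d = 0 \<or> f = 0)"
    then have "0 < d" "0 < f" by auto
    from positive_factors_bounds[OF eqs \<open>0 < c\<close> \<open>0 < d\<close> \<open>0 < e\<close> \<open>0 < f\<close>] assms(4)
    show False by auto
  qed
  with eqs assms(2) show "(c = 1 \<and> d = 0) \<or> (e = 1 \<and> f = 0)"
    by (rule coprime_imp_trivial_factor)
qed (use assms in auto)

lemma nat_mult_eq_seven: "c * e = (7::nat) \<Longrightarrow> c = 1 \<or> e = 1"
proof -
  assume ce: "c * e = 7"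
  then have "c \<le> 7" by (metis dvd_imp_le dvd_triv_left zero_less_numeral)
  then have "c \<in> {0, 1, 2, 3, 4, 5, 6, 7}" by auto
  then show ?thesis using ce by (auto; presburger)
qed

lemma sprime_seven: "sprime 7"
proof -
  have "sprime (real 7 + real 0 * sqrt 2)"
  proof (rule sprime_nat_plus_sqrt2I)
    fix c d e f :: nat
    assume eqs: "c * e + 2 * d * f = 7" "c * f + d * e = 0"
    have "0 < c" "0 < e" using odd_imp_rational_parts_pos[OF eqs(1)] by auto
    with eqs have "d = 0" "f = 0" by auto
    with eqs have "c * e = 7" by simp
    with \<open>d = 0\<close> \<open>f = 0\<close> show "(c = 1 \<and> d = 0) \<or> (e = 1 \<and> f = 0)"
      using nat_mult_eq_seven by blast
  qed simp_all
  then show ?thesis by simp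
qed

lemma sprime_5_plus_2_sqrt2: "sprime (5 + 2 * sqrt 2)"
  using sprime_nat_plus_sqrt2_if_odd_coprime[of 5 2]
  by (simp add: coprime_iff_gcd_eq_1 gcd_non_0_nat)

lemma sprime_3_plus_8_sqrt2: "sprime (3 + 8 * sqrt 2)"
  using sprime_nat_plus_sqrt2_if_odd_coprime[of 3 8]
  by (simp add: coprime_iff_gcd_eq_1 gcd_non_0_nat)

lemma sprime_1_plus_2_sqrt2: "sprime (1 + 2 * sqrt 2)"
  using sprime_nat_plus_sqrt2_if_odd_coprime[of 1 2] by simp

lemma sprime_factorD:
  "sprime p \<Longrightarrow> u \<in> S \<Longrightarrow> z \<in> S \<Longrightarrow> p = u * z \<Longrightarrow> u = 1 \<or> u = p"
  unfolding sprime_def sdvd_def by blast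

lemma sprime_neq_one: "sprime p \<Longrightarrow> p \<noteq> 1"
  unfolding sprime_def sunit_iff by blast

lemma sprop_not_transitive_if_sprime:
  assumes p: "sprime p" and r: "sprime r" and s: "sprime s" and q: "q \<in> S"
    and pq_rs: "p * q = r * s" and "p \<noteq> r" "p \<noteq> s"
  shows "sprop p s (p * q) (q * s)" "sprop (p * q) (q * s) r q" "\<not> sprop p s r q"
proof -
  have inS: "p \<in> S" "r \<in> S" "s \<in> S" using p r s unfolding sprime_def by auto
  show "sprop p s (p * q) (q * s)" unfolding sprop_def
    using inS q one_in_S
    by (intro bexI[of _ 1] bexI[of _ q] bexI[of _ p] bexI[of _ s]) (auto simp: mult.commute)
  show "sprop (p * q) (q * s) r q" unfolding sprop_def
    using inS q one_in_S pq_rs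
    by (intro bexI[of _ s] bexI[of _ 1] bexI[of _ r] bexI[of _ q]) (auto simp: mult.commute)
  show "\<not> sprop p s r q"
  proof
    assume "sprop p s r q"
    then obtain x y m n where xymn: "x \<in> S" "y \<in> S" "m \<in> S" "n \<in> S"
      and eqs: "p = m * x" "s = n * x" "r = m * y" "q = n * y"
      unfolding sprop_def by blast
    have "x = 1 \<or> x = p" using sprime_factorD[OF p xymn(1,3)] eqs(1) by (simp add: mult.commute)
    then show False
    proof
      assume "x = 1"
      with eqs have "r = p * y" by simp
      then have "p = 1 \<or> p = r" using sprime_factorD[OF r inS(1) xymn(2)] by simp
      with p \<open>p \<noteq> r\<close> show False using sprime_neq_one by blast
    next
      assume "x = p"
      with eqs have "s = p * n" by (simp add: mult.commute)
      then have "p = 1 \<or> p = s" using sprime_factorD[OF s inS(1) xymn(4)] by simp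
      with p \<open>p \<noteq> s\<close> show False using sprime_neq_one by blast
    qed
  qed
qed

lemma no_sgcd_if_sprime:
  assumes p: "sprime p" and q: "sprime q" and s: "sprime s" and r: "r \<in> S"
    and pq_rs: "p * q = r * s" and "p \<noteq> s" "q \<noteq> s"
  shows "\<not> is_sgcd g (p * q) (p * s)"
proof
  assume "is_sgcd g (p * q) (p * s)"
  then have g: "sdvd g (p * q)" "sdvd g (p * s)"
    and greatest: "\<And>c. c \<in> S \<Longrightarrow> sdvd c (p * q) \<Longrightarrow> sdvd c (p * s) \<Longrightarrow> sdvd c g"
    unfolding is_sgcd_def by blast+
  have inS: "p \<in> S" "q \<in> S" "s \<in> S" using p q s unfolding sprime_def by auto
  have "p \<noteq> 0" using S_pos inS(1) by force
  have "sdvd p g" using greatest[OF inS(1)] inS unfolding sdvd_def by blast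
  then obtain t where t: "t \<in> S" "g = p * t" unfolding sdvd_def by blast
  have "sdvd s g" using greatest[OF inS(3)] inS r pq_rs unfolding sdvd_def by (metis mult.commute)
  then obtain w where w: "w \<in> S" "g = s * w" unfolding sdvd_def by blast
  obtain z where z: "z \<in> S" "p * q = g * z" using g(1) unfolding sdvd_def by blast
  with t \<open>p \<noteq> 0\<close> have "q = t * z" by (simp add: mult.assoc)
  then have "t = 1 \<or> t = q" using sprime_factorD[OF q t(1) z(1)] by simp
  then show False
  proof
    assume "t = 1"
    with t w have "p = s * w" by simp
    then have "s = 1 \<or> s = p" using sprime_factorD[OF p inS(3) w(1)] by simp
    with s \<open>p \<noteq> s\<close> show False using sprime_neq_one by auto
  next
    assume "t = q"
    obtain z' where z': "z' \<in> S" "p * s = g * z'" using g(2) unfolding sdvd_def by blast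
    with t \<open>t = q\<close> \<open>p \<noteq> 0\<close> have "s = q * z'" by (simp add: mult.assoc)
    then have "q = 1 \<or> q = s" using sprime_factorD[OF s inS(2) z'(1)] by simp
    with q \<open>q \<noteq> s\<close> show False using sprime_neq_one by auto
  qed
qed

theorem mainTheorem14:
  shows "(\<forall>x. sunit x \<longleftrightarrow> x = 1)
    \<and> (7 * (5 + 2 * sqrt 2) = (3 + 8 * sqrt 2) * (1 + 2 * sqrt 2)
       \<and> sprime 7 \<and> sprime (5 + 2 * sqrt 2) \<and> sprime (3 + 8 * sqrt 2) \<and> sprime (1 + 2 * sqrt 2))
    \<and> \<not> (\<forall>a\<in>S. \<forall>b\<in>S. \<forall>c\<in>S. \<forall>d\<in>S. \<forall>e\<in>S. \<forall>f\<in>S.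
            sprop a b c d \<and> sprop c d e f \<longrightarrow> sprop a b e f)
    \<and> \<not> (\<exists>g. is_sgcd g (7 * (5 + 2 * sqrt 2)) (7 * (1 + 2 * sqrt 2)))"
proof -
  have identity: "7 * (5 + 2 * sqrt 2) = (3 + 8 * sqrt 2) * (1 + 2 * sqrt (2::real))"
    using nat_plus_sqrt2_mult[of 3 8 1 2] by simp
  have primes: "sprime 7" "sprime (5 + 2 * sqrt 2)" "sprime (3 + 8 * sqrt 2)" "sprime (1 + 2 * sqrt 2)"
    by (fact sprime_seven sprime_5_plus_2_sqrt2 sprime_3_plus_8_sqrt2 sprime_1_plus_2_sqrt2)+
  then have inS: "7 \<in> S" "5 + 2 * sqrt 2 \<in> S" "3 + 8 * sqrt 2 \<in> S" "1 + 2 * sqrt 2 \<in> S"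
    unfolding sprime_def by auto
  have "1 < sqrt (2::real)" "sqrt (2::real) < 2" by (simp_all add: sqrt2_less_2)
  then have distinct: "7 \<noteq> 3 + 8 * sqrt 2" "7 \<noteq> 1 + 2 * sqrt (2::real)"
    "5 + 2 * sqrt 2 \<noteq> 1 + 2 * sqrt (2::real)"
    by linarith+
  note not_transitive = sprop_not_transitive_if_sprime[OF primes(1,3,4) inS(2) identity distinct(1,2)]
  have "\<not> (\<forall>a\<in>S. \<forall>b\<in>S. \<forall>c\<in>S. \<forall>d\<in>S. \<forall>e\<in>S. \<forall>f\<in>S.
            sprop a b c d \<and> sprop c d e f \<longrightarrow> sprop a b e f)"
  proof
    assume "\<forall>a\<in>S. \<forall>b\<in>S. \<forall>c\<in>S. \<forall>d\<in>S. \<forall>e\<in>S. \<forall>f\<in>S.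
              sprop a b c d \<and> sprop c d e f \<longrightarrow> sprop a b e f"
    from this[rule_format, OF inS(1,4) S_mult_closed[OF inS(1,2)] S_mult_closed[OF inS(2,4)] inS(3,2)]
    show False using not_transitive by blast
  qed
  moreover have "\<not> (\<exists>g. is_sgcd g (7 * (5 + 2 * sqrt 2)) (7 * (1 + 2 * sqrt 2)))"
    using no_sgcd_if_sprime[OF primes(1,2,4) inS(3) identity distinct(2,3)] by blast
  moreover have "\<forall>x. sunit x \<longleftrightarrow> x = 1" using sunit_iff by blast
  ultimately show ?thesis using identity primes by (intro conjI)
qed

end
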